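(* Let $m_c\in H$, with local components $m_\lambda=\sum_{j=0,1}Y^j\sum_{\ell\ge0}b^\lambda_{j,\ell}s_\lambda^\ell$ for $\lambda\in\Lambda$. Then there exist real numbers $\alpha$ and $\beta$ such that $$v_p\big(b^\lambda_{j,\ell}\big)\ \ge\ -\big(\alpha\log_p(\ell)+\beta\big)$$ for all $\lambda\in\Lambda$, all $j\in\{0,1\}$ and all integers $\ell\ge1$.
   Context: Standing setup. Let $k$ be a finite field of odd characteristic $p$, $W(k)$ its ring of Witt vectors, $K$ the fraction field of $W(k)$, $v_p$ the $p$-adic valuation on $K$, $|\cdot|$ the $p$-adic absolute value, and $\log_p$ the real logarithm to base $p$. Let $g\ge1$ and let $\lambda_1,\dots,\lambda_{2g+1}\in W(k)$ have pairwise distinct reductions modulo $p$. Put $Q(t)=\prod_{i=1}^{2g+1}(t-\lambda_i)$ and $h(t)=\frac{Q'(t)}{2Q(t)}$. Let $\Lambda=\{\lambda_1,\dots,\lambda_{2g+1},\infty\}$, $\Lambda_0=\Lambda\setminus\{\infty\}$. The local parameter at $\lambda\in\Lambda_0$ is $s_\lambda=t-\lambda$, and at $\infty$ it is $s_\infty=t^{-1}$. Let $B_K^\dagger$ be the ring of series $\sum_{\underline\ell\ge0}a_{\underline\ell}\,t^{\ell_0}\prod_{i}(t-\lambda_i)^{-\ell_i}$ ($a_{\underline\ell}\in K$) for which there is $\eta>1$ with $|a_{\underline\ell}|\eta^{\max_i\ell_i}\to0$; $\phi_\lambda(f)$ is the Laurent expansion of $f\in B_K^\dagger$ in $s_\lambda$.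 The principal part is $\Pr_\lambda(\sum a_\ell s_\lambda^\ell)=\sum_{\ell<0}a_\ell s_\lambda^\ell$ for $\lambda\in\Lambda_0$ and $\Pr_\infty(\sum a_\ell s_\infty^\ell)=\sum_{\ell\le0}a_\ell s_\infty^\ell$; its expansion at another point $\mu$ is denoted $\phi_\mu(\cdot)$. For $\lambda\in\Lambda_0$, $\tilde R_{\lambda,c}$ is the space of $\sum_{\ell\ge0}a_\ell s_\lambda^\ell$ with $|a_\ell|\eta^\ell\to0$ for all $\eta<1$, and $R_{\infty,c}$ the analogous space of $\sum_{\ell\ge1}a_\ell s_\infty^\ell$. $B_c=\prod_{\lambda\in\Lambda_0}\tilde R_{\lambda,c}\times R_{\infty,c}$ is a $B_K^\dagger$-module via $(f\cdot G)^\mu=\phi_\mu(f)G^\mu-\sum_{\lambda\in\Lambda}\phi_\mu\big(\Pr_\lambda(\phi_\lambda(f)G^\lambda)\big)$. Let $A_K^\dagger=B_K^\dagger\oplus B_K^\dagger Y$ with $Y^2=Q(t)$, $\nabla_{GM}(1)=0$, $\nabla_{GM}(Y)=hY$; $M_c=A_K^\dagger\otimes_{B_K^\dagger}B_c$ with elements $m_c=1\otimes G_0+Y\otimes G_1$ ($G_0,G_1\in B_c$) and $\nabla_c(m_c)=1\otimes\partial_tG_0+Y\otimes(\partial_tG_1+h\cdot G_1)$, $\partial_t$ acting componentwise (as $-s_\infty^2\,d/ds_\infty$ on series in $s_\infty$). $H=\ker\nabla_c$ (the space $H^1_{MW,c}(V,\pi_*A_K^\dagger)$). Local components: $m_\lambda=G_0^\lambda+YG_1^\lambda=\sum_{j=0,1}Y^j\sum_{\ell\ge0}b^\lambda_{j,\ell}s_\lambda^\ell$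 with $b^\infty_{j,0}=0$. *)

theory Defs
  imports Complex_Main "HOL-Computational_Algebra.Primes"
begin

text \<open>K is characterised (up to isomorphism) as a complete discretely valued field of
characteristic 0 in which p is a uniformizer (unramified) and whose residue field is finite
(of characteristic p); this is exactly Frac W(k) for the finite field k.  The valuation v
is only meaningful on nonzero elements.\<close>

definition pval_field :: "('a::field_char_0 \<Rightarrow> int) \<Rightarrow> nat \<Rightarrow> bool" where
  "pval_field v p \<longleftrightarrow> prime p \<and> odd p \<and>
     (\<forall>x y. x \<noteq> 0 \<longrightarrow> y \<noteq> 0 \<longrightarrow> v (x * y) = v x + v y) \<and>
     (\<forall>x y. x \<noteq> 0 \<longrightarrow> y \<noteq> 0 \<longrightarrow> x + y \<noteq> 0 \<longrightarrow> v (x + y) \<ge> min (v x) (v y)) \<and>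
     v (of_nat p) = 1 \<and>
     (\<forall>X::nat \<Rightarrow> 'a. (\<forall>M::int. \<exists>N. \<forall>m\<ge>N. \<forall>n\<ge>N. X m = X n \<or> v (X m - X n) \<ge> M)
        \<longrightarrow> (\<exists>L. \<forall>M::int. \<exists>N. \<forall>n\<ge>N. X n = L \<or> v (X n - L) \<ge> M)) \<and>
     (\<exists>R. finite R \<and> (\<forall>r\<in>R. r = 0 \<or> v r \<ge> 0) \<and>
        (\<forall>x. (x = 0 \<or> v x \<ge> 0) \<longrightarrow> (\<exists>r\<in>R. x = r \<or> v (x - r) \<ge> 1)))"

definition pnorm :: "('a::field_char_0 \<Rightarrow> int) \<Rightarrow> nat \<Rightarrow> 'a \<Rightarrow> real" where
  "pnorm v p x = (if x = 0 then 0 else real p powr (- real_of_int (v x)))"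

text \<open>Points: Some i stands for lambda_i (1 \<le> i \<le> N), None stands for infinity.\<close>
definition LamSet :: "nat \<Rightarrow> nat option set" where
  "LamSet N = Some ` {1..N} \<union> {None}"

text \<open>Coefficients of the expansion of (t - c)^(-k), k \<ge> 1, in the local parameter at mu.\<close>
definition inv_pow_exp :: "(nat \<Rightarrow> 'a::field_char_0) \<Rightarrow> 'a \<Rightarrow> nat \<Rightarrow> nat option \<Rightarrow> int \<Rightarrow> 'a" where
  "inv_pow_exp lam c k mu n =
    (case mu of
       None \<Rightarrow> (if n \<ge> int k then of_nat ((nat n - 1) choose (k - 1)) * c ^ (nat n - k) else 0)
     | Some j \<Rightarrow>
        (if lam j = c then (if n = - int k then 1 else 0)
         else if n \<ge> 0 then (-1) ^ nat n * of_nat ((nat n + k - 1) choose nat n) / (lam j - c) ^ (nat n + k)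
         else 0))"

text \<open>Coefficients of the expansion of t^k in the local parameter at mu.\<close>
definition poly_exp :: "(nat \<Rightarrow> 'a::field_char_0) \<Rightarrow> nat \<Rightarrow> nat option \<Rightarrow> int \<Rightarrow> 'a" where
  "poly_exp lam k mu n =
    (case mu of
       None \<Rightarrow> (if n = - int k then 1 else 0)
     | Some j \<Rightarrow> (if 0 \<le> n \<and> n \<le> int k then of_nat (k choose nat n) * lam j ^ (k - nat n) else 0))"

definition Pr :: "nat option \<Rightarrow> (int \<Rightarrow> 'a::zero) \<Rightarrow> int \<Rightarrow> 'a" where
  "Pr mu c n = (case mu of None \<Rightarrow> (if n \<le> 0 then c n else 0) | Some _ \<Rightarrow> (if n < 0 then c n else 0))"

text \<open>Expansion at mu of a (finite) principal part P taken at the point la.\<close>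
definition expand_pp :: "(nat \<Rightarrow> 'a::field_char_0) \<Rightarrow> nat option \<Rightarrow> (int \<Rightarrow> 'a) \<Rightarrow> nat option \<Rightarrow> int \<Rightarrow> 'a" where
  "expand_pp lam la P mu n =
    (case la of
       Some i \<Rightarrow> (\<Sum>k\<in>{k::nat. 1 \<le> k \<and> P (- int k) \<noteq> 0}. P (- int k) * inv_pow_exp lam (lam i) k mu n)
     | None \<Rightarrow> (\<Sum>k\<in>{k::nat. P (- int k) \<noteq> 0}. P (- int k) * poly_exp lam k mu n))"

text \<open>Product of two Laurent series both vanishing below index lb.\<close>
definition lmul :: "int \<Rightarrow> (int \<Rightarrow> 'a::comm_ring) \<Rightarrow> (int \<Rightarrow> 'a) \<Rightarrow> int \<Rightarrow> 'a" where
  "lmul lb a b n = (\<Sum>k\<in>{lb..n - lb}. a k * b (n - k))"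

text \<open>Expansion of h = Q'/(2Q) = (1/2) sum_i 1/(t - lambda_i) at mu.\<close>
definition hexp :: "(nat \<Rightarrow> 'a::field_char_0) \<Rightarrow> nat \<Rightarrow> nat option \<Rightarrow> int \<Rightarrow> 'a" where
  "hexp lam N mu n = (1/2) * (\<Sum>i\<in>{1..N}. inv_pow_exp lam (lam i) 1 mu n)"

text \<open>An element G of B_c: G mu l is the coefficient of s_mu^l (l \<ge> 0) of the component at mu.\<close>
definition lift :: "(nat option \<Rightarrow> nat \<Rightarrow> 'a::zero) \<Rightarrow> nat option \<Rightarrow> int \<Rightarrow> 'a" where
  "lift G mu n = (if n \<ge> 0 then G mu (nat n) else 0)"

definition overconv_open :: "('a::field_char_0 \<Rightarrow> int) \<Rightarrow> nat \<Rightarrow> (nat \<Rightarrow> 'a) \<Rightarrow> bool" where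
  "overconv_open v p a \<longleftrightarrow>
     (\<forall>eta::real. 0 < eta \<and> eta < 1 \<longrightarrow> (\<lambda>l. pnorm v p (a l) * eta ^ l) \<longlonglongrightarrow> 0)"

definition in_Bc :: "('a::field_char_0 \<Rightarrow> int) \<Rightarrow> nat \<Rightarrow> nat \<Rightarrow> (nat option \<Rightarrow> nat \<Rightarrow> 'a) \<Rightarrow> bool" where
  "in_Bc v p N G \<longleftrightarrow>
     (\<forall>i\<in>{1..N}. overconv_open v p (G (Some i))) \<and>
     overconv_open v p (G None) \<and> G None 0 = 0 \<and>
     (\<forall>i. i \<notin> {1..N} \<longrightarrow> G (Some i) = (\<lambda>_. 0))"

text \<open>The B_K^dagger-module action of h on B_c:
  (h.G)^mu = phi_mu(h) G^mu - sum_{la in Lambda} phi_mu(Pr_la(phi_la(h) G^la)).\<close>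
definition hact :: "(nat \<Rightarrow> 'a::field_char_0) \<Rightarrow> nat \<Rightarrow> (nat option \<Rightarrow> nat \<Rightarrow> 'a) \<Rightarrow> nat option \<Rightarrow> nat \<Rightarrow> 'a" where
  "hact lam N G mu n =
     lmul (-1) (hexp lam N mu) (lift G mu) (int n)
     - (\<Sum>la\<in>LamSet N. expand_pp lam la (Pr la (lmul (-1) (hexp lam N la) (lift G la))) mu (int n))"

text \<open>d/dt componentwise: d/ds at finite points, -s^2 d/ds at infinity.\<close>
definition deriv_t :: "nat option \<Rightarrow> (nat option \<Rightarrow> nat \<Rightarrow> 'a::field_char_0) \<Rightarrow> nat \<Rightarrow> 'a" where
  "deriv_t mu G n =
    (case mu of
       None \<Rightarrow> (if n \<ge> 2 then - of_nat (n - 1) * G None (n - 1) else 0)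
     | Some _ \<Rightarrow> of_nat (n + 1) * G mu (n + 1))"

text \<open>m_c = 1 (x) G0 + Y (x) G1 lies in H = ker nabla_c.\<close>
definition in_H :: "('a::field_char_0 \<Rightarrow> int) \<Rightarrow> nat \<Rightarrow> (nat \<Rightarrow> 'a) \<Rightarrow> nat
     \<Rightarrow> (nat option \<Rightarrow> nat \<Rightarrow> 'a) \<Rightarrow> (nat option \<Rightarrow> nat \<Rightarrow> 'a) \<Rightarrow> bool" where
  "in_H v p lam N G0 G1 \<longleftrightarrow> in_Bc v p N G0 \<and> in_Bc v p N G1 \<and>
     (\<forall>mu\<in>LamSet N. \<forall>n. deriv_t mu G0 n = 0 \<and> deriv_t mu G1 n + hact lam N G1 mu n = 0)"

end

theory Submission
  imports Defs "HOL-Computational_Algebra.Formal_Power_Series"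
begin

text \<open>
  Write N = 2g+1.  That m_c = 1 (x) G0 + Y (x) G1 lies in H means d/dt G0 = 0, so only the
  constant terms of G0 survive, and d/dt G1 + h.G1 = 0.  Computing the module action h.G1
  explicitly, the latter becomes, at each point of Lambda, a first-order differential
  equation for the power series f = G1^mu in the local parameter s:
      2 s f' + a f + s U f = T,
  with a odd (a = 1 at a finite point, a = -N at infinity), U a sum of series c/(1 + c s)
  with p-integral c, and T a series whose coefficients have bounded-below valuation.
  Multiplying by the integrating factor W = prod (1 + c s)^(1/2), which is p-integral
  because p is odd, gives (2n + a) (W f)_n = (W T)_n; as v(2n + a) <= log_p |2n + a|,
  this yields v(f_n) >= -(log_p n + beta).  So the theorem holds with alpha = 1.
\<close>

unbundle fps_syntax

section \<open>Valuation bounds\<close>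

text \<open>x has valuation at least M (vacuously true for x = 0, where v carries no meaning).\<close>
definition val_ge :: "('a::field_char_0 \<Rightarrow> int) \<Rightarrow> real \<Rightarrow> 'a \<Rightarrow> bool" where
  "val_ge v M x \<longleftrightarrow> x = 0 \<or> M \<le> real_of_int (v x)"

locale padic_valuation =
  fixes v :: "'a::field_char_0 \<Rightarrow> int" and p :: nat
  assumes pval: "pval_field v p"
begin

lemma prime_p: "prime p" and odd_p: "odd p"
  and v_mult: "x \<noteq> 0 \<Longrightarrow> y \<noteq> 0 \<Longrightarrow> v (x * y) = v x + v y"
  and v_add: "x \<noteq> 0 \<Longrightarrow> y \<noteq> 0 \<Longrightarrow> x + y \<noteq> 0 \<Longrightarrow> v (x + y) \<ge> min (v x) (v y)"
  and v_p: "v (of_nat p) = 1"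
  using pval unfolding pval_field_def by auto

lemma p_gt_1: "real p > 1"
  using prime_p prime_gt_1_nat by auto

lemma v_one: "v 1 = 0"
  using v_mult[of 1 1] by simp

lemma v_inverse: "x \<noteq> 0 \<Longrightarrow> v (inverse x) = - v x"
  using v_mult[of x "inverse x"] v_one by simp

lemma v_minus: "x \<noteq> 0 \<Longrightarrow> v (- x) = v x"
  using v_mult[of "-1" "-1"] v_mult[of "-1" x] v_one by simp

lemma val_ge_0 [simp]: "val_ge v M 0"
  by (simp add: val_ge_def)

lemma val_ge_one: "val_ge v 0 1"
  by (simp add: val_ge_def v_one)

lemma val_ge_mono: "val_ge v M x \<Longrightarrow> M' \<le> M \<Longrightarrow> val_ge v M' x"
  by (auto simp: val_ge_def)

lemma val_ge_mult: "val_ge v a x \<Longrightarrow> val_ge v b y \<Longrightarrow> val_ge v (a + b) (x * y)"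
  by (cases "x = 0 \<or> y = 0") (auto simp: val_ge_def v_mult)

lemma val_ge_minus: "val_ge v M x \<Longrightarrow> val_ge v M (- x)"
  by (cases "x = 0") (auto simp: val_ge_def v_minus)

lemma val_ge_add: "val_ge v M x \<Longrightarrow> val_ge v M y \<Longrightarrow> val_ge v M (x + y)"
  using v_add[of x y] by (cases "x = 0 \<or> y = 0 \<or> x + y = 0") (auto simp: val_ge_def)

lemma val_ge_sum: "(\<And>i. i \<in> S \<Longrightarrow> val_ge v M (f i)) \<Longrightarrow> val_ge v M (sum f S)"
  by (induction S rule: infinite_finite_induct) (auto simp: val_ge_add)

lemma val_ge_power: "val_ge v 0 x \<Longrightarrow> val_ge v 0 (x ^ n)"
  by (induction n) (auto simp: val_ge_one dest: val_ge_mult[of 0 x 0])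

lemma finite_val_ge_bound: "finite A \<Longrightarrow> \<exists>B. \<forall>x\<in>A. val_ge v (- B) x"
proof (induction A rule: finite_induct)
  case (insert x F)
  then obtain B where "\<forall>y\<in>F. val_ge v (- B) y" by blast
  then have "\<forall>y\<in>insert x F. val_ge v (- max B (- real_of_int (v x))) y"
    by (auto simp: val_ge_def)
  then show ?case by blast
qed simp

lemma val_ge_of_nat: "val_ge v 0 (of_nat n)"
  by (induction n) (auto simp: val_ge_one val_ge_add)

lemma val_ge_of_int: "val_ge v 0 (of_int z)"
  using val_ge_of_nat[of "nat z"] val_ge_minus[OF val_ge_of_nat[of "nat (- z)"]]
  by (cases "z \<ge> 0") simp_all

lemma v_of_int_coprime:
  assumes "coprime m (int p)" "m \<noteq> 0"
  shows "v (of_int m) = 0"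
proof (rule ccontr)
  assume "v (of_int m) \<noteq> 0"
  then have m: "val_ge v 1 (of_int m)"
    using val_ge_of_int[of m] assms(2) by (simp add: val_ge_def)
  obtain x y where "x * m + y * int p = 1"
    using assms(1) bezout_int[of m "int p"] by (auto simp: coprime_iff_gcd_eq_1)
  then have one: "of_int x * of_int m + of_int y * of_nat p = (1::'a)"
    by (metis of_int_1 of_int_add of_int_mult of_int_of_nat_eq)
  have "val_ge v 1 (of_nat p)"
    by (simp add: val_ge_def v_p)
  then have "val_ge v 1 (of_int x * of_int m + of_int y * of_nat p)"
    using val_ge_mult[OF val_ge_of_int m] val_ge_mult[OF val_ge_of_int, of 1 "of_nat p" y]
    by (intro val_ge_add) simp_all
  then show False
    unfolding one by (simp add: val_ge_def v_one)
qed

lemma v_two: "v (2::'a) = 0"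
proof -
  have "coprime (2::nat) p" using odd_p by (intro prime_imp_coprime) auto
  then have "coprime (2::int) (int p)" by (metis coprime_int_iff of_nat_numeral)
  then show ?thesis using v_of_int_coprime[of 2] by simp
qed

lemma v_of_int_le_log:
  assumes "m \<noteq> 0"
  shows "real_of_int (v (of_int m)) \<le> log (real p) \<bar>real_of_int m\<bar>"
  using assms
proof (induction "nat \<bar>m\<bar>" arbitrary: m rule: less_induct)
  case (less m)
  show ?case
  proof (cases "int p dvd m")
    case True
    then obtain m' where m': "m = int p * m'" by (auto simp: dvd_def)
    have m'0: "m' \<noteq> 0" using m' less.prems by auto
    have "nat \<bar>m'\<bar> < nat \<bar>m\<bar>" using m' m'0 p_gt_1
      by (auto simp: abs_mult nat_mult_distrib)
    then have IH: "real_of_int (v (of_int m')) \<le> log (real p) \<bar>real_of_int m'\<bar>"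
      using less.hyps m'0 by blast
    have "v (of_int m) = 1 + v (of_int m')"
      using m' v_mult[of "of_nat p" "of_int m'"] m'0 v_p p_gt_1 by simp
    moreover have "log (real p) \<bar>real_of_int m\<bar> = 1 + log (real p) \<bar>real_of_int m'\<bar>"
      using m' p_gt_1 m'0 by (simp add: abs_mult log_mult)
    ultimately show ?thesis using IH by simp
  next
    case False
    then have "coprime (int p) m"
      using prime_p by (intro prime_imp_coprime) simp_all
    then have "coprime m (int p)"
      by (simp add: coprime_commute)
    then have "v (of_int m) = 0" using v_of_int_coprime less.prems by blast
    then show ?thesis using p_gt_1 less.prems by simp
  qed
qed

end

section \<open>Power series with p-integral coefficients\<close>

definition integral_fps :: "('a::field_char_0 \<Rightarrow> int) \<Rightarrow> 'a fps \<Rightarrow> bool" where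
  "integral_fps v F \<longleftrightarrow> (\<forall>n. val_ge v 0 (F $ n))"

context padic_valuation
begin

lemma val_ge_mult_integral_fps:
  "integral_fps v F \<Longrightarrow> (\<And>n. val_ge v M (G $ n)) \<Longrightarrow> val_ge v M ((F * G) $ n)"
  unfolding integral_fps_def fps_mult_nth using val_ge_mult[of 0 _ M] by (auto intro!: val_ge_sum)

lemma integral_fps_mult: "integral_fps v F \<Longrightarrow> integral_fps v G \<Longrightarrow> integral_fps v (F * G)"
  using val_ge_mult_integral_fps[of F 0 G] by (simp add: integral_fps_def)

lemma integral_fps_prod: "(\<And>i. i \<in> S \<Longrightarrow> integral_fps v (f i)) \<Longrightarrow> integral_fps v (prod f S)"
proof (induction S rule: infinite_finite_induct)
  case (insert x F)
  then show ?case by (simp add: integral_fps_mult)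
qed (simp_all add: integral_fps_def val_ge_one)

text \<open>A p-integral series with constant term 1 is a unit among p-integral series: the
  coefficients of its inverse are computed by a recursion using only ring operations.\<close>
lemma integral_fps_inverse:
  assumes F: "integral_fps v F" and F0: "F $ 0 = 1"
  shows "integral_fps v (inverse F)"
proof -
  have "val_ge v 0 (fps_right_inverse_constructor F 1 n)" for n
  proof (induction n rule: less_induct)
    case (less n)
    show ?case
    proof (cases n)
      case 0
      then show ?thesis by (simp add: val_ge_one)
    next
      case (Suc m)
      have "val_ge v 0 (\<Sum>i=1..n. F $ i * fps_right_inverse_constructor F 1 (n - i))"
        using F less.IH val_ge_mult[of 0 _ 0] unfolding integral_fps_def
        by (intro val_ge_sum) (simp del: fps_right_inverse_constructor.simps)
      then have "val_ge v 0 (- 1 * (\<Sum>i=1..n. F $ i * fps_right_inverse_constructor F 1 (n - i)))"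
        by (simp add: val_ge_minus)
      then show ?thesis
        using Suc by (simp only: fps_right_inverse_constructor.simps(2))
    qed
  qed
  then show ?thesis
    using F0 unfolding integral_fps_def fps_inverse_def
    by (simp del: fps_right_inverse_constructor.simps)
qed

end

section \<open>The series (1 + c s)^(-1/2)\<close>

text \<open>The logarithmic derivative c/(1 + c s) of 1 + c s, as a power series in s.\<close>
definition dlog_fps :: "'a::field_char_0 \<Rightarrow> 'a fps" where
  "dlog_fps c = Abs_fps (\<lambda>n. (- c) ^ n * c)"

text \<open>The binomial series (1 + c s)^(-1/2) = sum (-1)^n binom(2n, n) (c/4)^n s^n.\<close>
definition inv_sqrt_fps :: "'a::field_char_0 \<Rightarrow> 'a fps" where
  "inv_sqrt_fps c = Abs_fps (\<lambda>n. (-1) ^ n * of_nat ((2 * n) choose n) * c ^ n / 4 ^ n)"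

lemma dlog_fps_eq: "(1 + fps_const c * fps_X) * dlog_fps c = fps_const c"
proof (rule fps_ext)
  fix n
  show "((1 + fps_const c * fps_X) * dlog_fps c) $ n = fps_const c $ n"
    by (cases n) (simp_all add: dlog_fps_def algebra_simps)
qed

lemma central_binomial_Suc:
  "(n + 1) * ((2 * (n + 1)) choose (n + 1)) = 2 * (2 * n + 1) * ((2 * n) choose n)"
proof -
  have "(2 * n + 1) choose n = (2 * n + 1) choose (n + 1)"
    using binomial_symmetric[of n "2 * n + 1"] by (simp add: Suc_diff_le)
  moreover have "(n + 1) * ((2 * n + 1) choose (n + 1)) = (2 * n + 1) * ((2 * n) choose n)"
    using Suc_times_binomial[of n "2 * n"] by simp
  moreover have "(n + 1) * ((2 * (n + 1)) choose (n + 1)) = 2 * (n + 1) * ((2 * n + 1) choose n)"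
    using Suc_times_binomial[of n "2 * n + 1"] by (simp add: mult_2)
  ultimately show ?thesis
    by (metis mult.assoc mult.left_commute)
qed

lemma inv_sqrt_fps_Suc:
  "(of_nat n + 1) * inv_sqrt_fps c $ (n + 1) = - c * (2 * of_nat n + 1) / 2 * inv_sqrt_fps c $ n"
proof -
  define A :: 'a where "A = of_nat ((2 * (n + 1)) choose (n + 1))"
  define B :: 'a where "B = of_nat ((2 * n) choose n)"
  have "(of_nat ((n + 1) * ((2 * (n + 1)) choose (n + 1))) :: 'a)
      = of_nat (2 * (2 * n + 1) * ((2 * n) choose n))"
    by (simp only: central_binomial_Suc)
  then have AB: "(of_nat n + 1) * A = 2 * (2 * of_nat n + 1) * B"
    unfolding A_def B_def by (simp only: of_nat_mult of_nat_add of_nat_1 of_nat_numeral)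
  have "(of_nat n + 1) * inv_sqrt_fps c $ (n + 1) = (-1) ^ (n + 1) * ((of_nat n + 1) * A) * c ^ (n + 1) / 4 ^ (n + 1)"
    unfolding inv_sqrt_fps_def A_def by simp
  also have "\<dots> = - c * (2 * of_nat n + 1) / 2 * ((-1) ^ n * B * c ^ n / 4 ^ n)"
    unfolding AB by (simp add: field_simps)
  finally show ?thesis
    unfolding inv_sqrt_fps_def B_def by simp
qed

lemma inv_sqrt_fps_ode: "fps_const 2 * fps_deriv (inv_sqrt_fps c) = - (dlog_fps c * inv_sqrt_fps c)"
proof -
  let ?B = "inv_sqrt_fps c" and ?L = "1 + fps_const c * fps_X :: 'a fps"
  have "(fps_const 2 * (?L * fps_deriv ?B)) $ n = (- (fps_const c * ?B)) $ n" for n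
  proof -
    have "?L * fps_deriv ?B = fps_deriv ?B + fps_const c * (fps_X * fps_deriv ?B)"
      by (simp add: algebra_simps)
    then have "(?L * fps_deriv ?B) $ n = (of_nat n + 1) * ?B $ (n + 1) + c * of_nat n * ?B $ n"
      by (cases n) (simp_all add: fps_X_mult_nth algebra_simps)
    also have "\<dots> = - c * (2 * of_nat n + 1) / 2 * ?B $ n + c * of_nat n * ?B $ n"
      by (simp only: inv_sqrt_fps_Suc)
    finally have "(?L * fps_deriv ?B) $ n = - c * (2 * of_nat n + 1) / 2 * ?B $ n + c * of_nat n * ?B $ n" .
    then show ?thesis
      unfolding fps_mult_left_const_nth fps_neg_nth by (simp add: field_simps)
  qed
  then have "fps_const 2 * (?L * fps_deriv ?B) = - (fps_const c * ?B)"
    by (rule fps_ext)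
  moreover have "?L * (fps_const 2 * fps_deriv ?B + dlog_fps c * ?B)
      = fps_const 2 * (?L * fps_deriv ?B) + (?L * dlog_fps c) * ?B"
    by (simp add: algebra_simps)
  ultimately have "?L * (fps_const 2 * fps_deriv ?B + dlog_fps c * ?B) = 0"
    by (simp add: dlog_fps_eq)
  moreover have "?L $ 0 \<noteq> 0 $ 0"
    by simp
  then have "?L \<noteq> 0"
    by metis
  ultimately show ?thesis
    by (simp add: eq_neg_iff_add_eq_0)
qed

definition inv_sqrt_prod :: "'b set \<Rightarrow> ('b \<Rightarrow> 'a::field_char_0) \<Rightarrow> 'a fps" where
  "inv_sqrt_prod S c = (\<Prod>i\<in>S. inv_sqrt_fps (c i))"

lemma inv_sqrt_prod_ode:
  "finite S \<Longrightarrow> fps_const 2 * fps_deriv (inv_sqrt_prod S c)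
     = - ((\<Sum>i\<in>S. dlog_fps (c i)) * inv_sqrt_prod S c)"
proof (induction S rule: finite_induct)
  case (insert x F)
  have "inv_sqrt_prod (insert x F) c = inv_sqrt_fps (c x) * inv_sqrt_prod F c"
    using insert by (simp add: inv_sqrt_prod_def)
  moreover have "fps_const 2 * fps_deriv (inv_sqrt_fps (c x) * inv_sqrt_prod F c)
      = inv_sqrt_fps (c x) * (fps_const 2 * fps_deriv (inv_sqrt_prod F c))
        + (fps_const 2 * fps_deriv (inv_sqrt_fps (c x))) * inv_sqrt_prod F c"
    by (simp add: algebra_simps)
  ultimately show ?case
    using insert by (simp add: inv_sqrt_fps_ode algebra_simps)
qed (simp add: inv_sqrt_prod_def)

lemma inv_sqrt_prod_0: "inv_sqrt_prod S c $ 0 = 1"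
  by (induction S rule: infinite_finite_induct) (simp_all add: inv_sqrt_prod_def inv_sqrt_fps_def)

context padic_valuation
begin

text \<open>Since p is odd, the coefficients binom(2n, n) (c/4)^n are p-integral when c is.\<close>
lemma integral_inv_sqrt_fps:
  assumes c: "val_ge v 0 c"
  shows "integral_fps v (inv_sqrt_fps c)"
proof -
  have "v (4::'a) = 0"
    using v_mult[of 2 2] v_two by simp
  then have inv4: "val_ge v 0 (inverse (4::'a))"
    using v_inverse[of 4] by (simp add: val_ge_def)
  have "val_ge v 0 ((-1) ^ n * of_nat ((2 * n) choose n) * c ^ n * inverse 4 ^ n)" for n
    using val_ge_mult[OF val_ge_mult[OF val_ge_mult[OF val_ge_power[OF val_ge_minus[OF val_ge_one], of n]
          val_ge_of_nat] val_ge_power[OF c]] val_ge_power[OF inv4]]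
    by simp
  moreover have "inv_sqrt_fps c $ n = (-1) ^ n * of_nat ((2 * n) choose n) * c ^ n * inverse 4 ^ n" for n
    unfolding inv_sqrt_fps_def fps_nth_Abs_fps divide_inverse power_inverse ..
  ultimately show ?thesis
    unfolding integral_fps_def by simp
qed

lemma integral_dlog_fps:
  assumes c: "val_ge v 0 c"
  shows "integral_fps v (dlog_fps c)"
proof -
  have "val_ge v 0 ((- c) ^ n * c)" for n
    using val_ge_mult[OF val_ge_power[OF val_ge_minus[OF c]] c] by simp
  then show ?thesis
    unfolding integral_fps_def dlog_fps_def by simp
qed

lemma integral_inv_sqrt_prod:
  "(\<And>i. i \<in> S \<Longrightarrow> val_ge v 0 (c i)) \<Longrightarrow> integral_fps v (inv_sqrt_prod S c)"
  unfolding inv_sqrt_prod_def by (intro integral_fps_prod integral_inv_sqrt_fps)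

end

section \<open>An integrating factor for 2 s f' + a f + s U f = T\<close>

lemma inverse_fps_ode:
  fixes V U :: "'a::field_char_0 fps"
  assumes ode: "fps_const 2 * fps_deriv V = - (U * V)" and V0: "V $ 0 = 1"
  shows "fps_const 2 * fps_deriv (inverse V) = U * inverse V"
proof -
  define W where "W = inverse V"
  have VW: "V * W = 1"
    unfolding W_def by (rule inverse_mult_eq_1') (simp add: V0)
  have "fps_deriv (V * W) = 0"
    using VW by simp
  then have "fps_const 2 * (V * fps_deriv W + fps_deriv V * W) = 0"
    by simp
  then have "V * (fps_const 2 * fps_deriv W) + (fps_const 2 * fps_deriv V) * W = 0"
    by (simp add: algebra_simps)
  then have "V * (fps_const 2 * fps_deriv W) = V * (U * W)"
    unfolding ode using VW by (simp add: algebra_simps add_eq_0_iff)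
  moreover have "V \<noteq> 0"
    using V0 by (metis fps_zero_nth zero_neq_one)
  ultimately show ?thesis
    unfolding W_def by simp
qed

lemma ode_operator_nth:
  fixes f R :: "'a::field_char_0 fps"
  shows "(fps_const 2 * (fps_X * fps_deriv f) + fps_const a * f + R) $ n = (2 * of_nat n + a) * f $ n + R $ n"
  by (cases n) (simp_all add: algebra_simps)

text \<open>With 2 W' = U W, the equation 2 s f' + a f + s U f = T becomes 2 s (W f)' + a W f = W T,
  i.e. (2n + a) (W f)_n = (W T)_n coefficientwise.\<close>
lemma integrating_factor_coeff:
  fixes W U f T :: "'a::field_char_0 fps"
  assumes W: "fps_const 2 * fps_deriv W = U * W"
    and eq: "fps_const 2 * (fps_X * fps_deriv f) + fps_const a * f + fps_X * U * f = T"
  shows "(2 * of_nat n + a) * (W * f) $ n = (W * T) $ n"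
proof -
  have "fps_const 2 * (fps_X * fps_deriv (W * f)) + fps_const a * (W * f)
      = W * (fps_const 2 * (fps_X * fps_deriv f) + fps_const a * f) + fps_X * (fps_const 2 * fps_deriv W) * f"
    by (simp add: algebra_simps)
  also have "\<dots> = W * (fps_const 2 * (fps_X * fps_deriv f) + fps_const a * f + fps_X * U * f)"
    using W by (simp add: algebra_simps)
  also have "\<dots> = W * T"
    using eq by simp
  finally have WfT: "fps_const 2 * (fps_X * fps_deriv (W * f)) + fps_const a * (W * f) = W * T" .
  show ?thesis
    using ode_operator_nth[where a = a and f = "W * f" and R = 0 and n = n] unfolding WfT by simp
qed

lemma log_abs_linear_le:
  fixes b :: real and a :: int
  assumes b: "b > 1" and mn: "m \<le> n" "1 \<le> n" and k: "2 * int m + a \<noteq> 0"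
  shows "log b \<bar>real_of_int (2 * int m + a)\<bar> \<le> log b (real n) + log b (2 * (2 + \<bar>real_of_int a\<bar>))"
proof -
  have "\<bar>real_of_int a\<bar> * 1 \<le> \<bar>real_of_int a\<bar> * real n"
    using mn by (intro mult_left_mono) simp_all
  then have "\<bar>real_of_int (2 * int m + a)\<bar> \<le> 2 * (2 + \<bar>real_of_int a\<bar>) * real n"
    using mn by (simp add: algebra_simps)
  then have "log b \<bar>real_of_int (2 * int m + a)\<bar> \<le> log b (2 * (2 + \<bar>real_of_int a\<bar>) * real n)"
    using k b by simp
  also have "\<dots> = log b (real n) + log b (2 * (2 + \<bar>real_of_int a\<bar>))"
    using b mn by (simp add: log_mult)
  finally show ?thesis .
qed

context padic_valuation
begin

lemma val_ge_divide_int: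
  assumes k: "k \<noteq> 0" and eq: "of_int k * x = y" and y: "val_ge v M y"
  shows "val_ge v (M - log (real p) \<bar>real_of_int k\<bar>) x"
proof (cases "x = 0")
  case False
  have k': "(of_int k :: 'a) \<noteq> 0"
    using k by simp
  then have "y \<noteq> 0" "v y = v (of_int k) + v x"
    using eq False v_mult[OF k' False] by auto
  then show ?thesis
    using y v_of_int_le_log[OF k] unfolding val_ge_def by linarith
qed simp

lemma ode_solution_log_growth:
  fixes f U T V :: "'a fps" and a :: int and B :: real
  assumes eq: "fps_const 2 * (fps_X * fps_deriv f) + fps_const (of_int a) * f + fps_X * U * f = T"
    and V: "fps_const 2 * fps_deriv V = - (U * V)" "V $ 0 = 1" "integral_fps v V"
    and a: "odd a" and T: "\<And>n. val_ge v (- B) (T $ n)"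
  shows "\<exists>\<beta>. \<forall>n\<ge>1. val_ge v (- (log (real p) (real n) + \<beta>)) (f $ n)"
proof -
  define W where "W = inverse V"
  define K where "K = 2 * (2 + \<bar>real_of_int a\<bar>)"
  have VW: "V * W = 1"
    unfolding W_def by (rule inverse_mult_eq_1') (simp add: V)
  have coeff: "of_int (2 * int m + a) * (W * f) $ m = (W * T) $ m" for m
    using integrating_factor_coeff[OF inverse_fps_ode[OF V(1,2)] eq, of m] by (simp add: W_def)
  have WT: "val_ge v (- B) ((W * T) $ m)" for m
    using val_ge_mult_integral_fps[OF integral_fps_inverse[OF V(3,2)] T] by (simp add: W_def)
  have Wf: "val_ge v (- (log (real p) (real n) + (B + log (real p) K))) ((W * f) $ m)"
    if "m \<le> n" "1 \<le> n" for m n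
  proof -
    have k: "2 * int m + a \<noteq> 0"
      using a by presburger
    show ?thesis
      using log_abs_linear_le[OF p_gt_1 that k] unfolding K_def
      by (intro val_ge_mono[OF val_ge_divide_int[OF k coeff WT]]) simp
  qed
  have "val_ge v (- (log (real p) (real n) + (B + log (real p) K))) (f $ n)" if "1 \<le> n" for n
  proof -
    have "f $ n = (V * (W * f)) $ n"
      using VW by (simp flip: mult.assoc)
    also have "\<dots> = (\<Sum>i=0..n. V $ i * (W * f) $ (n - i))"
      by (rule fps_mult_nth)
    finally show ?thesis
      using Wf[OF _ that] V(3) val_ge_mult[of 0 "V $ _"] unfolding integral_fps_def
      by (auto intro!: val_ge_sum)
  qed
  then show ?thesis
    by blast
qed

end

section \<open>The connection on B_c in coordinates\<close>

lemma lift_neg: "m < 0 \<Longrightarrow> lift G mu m = 0"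
  by (simp add: lift_def)

lemma lift_nat [simp]: "lift G mu (int n) = G mu n"
  by (simp add: lift_def)

lemma lmul_split:
  fixes a b :: "int \<Rightarrow> 'a::comm_ring"
  assumes b: "\<And>m. m < 0 \<Longrightarrow> b m = 0"
  shows "lmul (-1) a b (int n) = a (-1) * b (int n + 1) + (\<Sum>i=0..n. a (int i) * b (int (n - i)))"
proof -
  have S: "{-1..int n - (-1)} = insert (-1) (insert (int n + 1) (int ` {0..n}))"
  proof (rule set_eqI)
    fix x :: int
    show "x \<in> {-1..int n - (-1)} \<longleftrightarrow> x \<in> insert (-1) (insert (int n + 1) (int ` {0..n}))"
    proof
      assume x: "x \<in> {-1..int n - (-1)}"
      show "x \<in> insert (-1) (insert (int n + 1) (int ` {0..n}))"
      proof (cases "x = -1 \<or> x = int n + 1")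
        case False
        then have "x = int (nat x)" "nat x \<in> {0..n}"
          using x by auto
        then show ?thesis
          by blast
      qed auto
    qed auto
  qed
  have "lmul (-1) a b (int n) = (\<Sum>k\<in>insert (-1) (insert (int n + 1) (int ` {0..n})). a k * b (int n - k))"
    unfolding lmul_def S ..
  also have "\<dots> = a (-1) * b (int n + 1) + (a (int n + 1) * b (-1) + (\<Sum>k\<in>int ` {0..n}. a k * b (int n - k)))"
    by (subst sum.insert, force, force, subst sum.insert, force, force) simp
  also have "(\<Sum>k\<in>int ` {0..n}. a k * b (int n - k)) = (\<Sum>i=0..n. a (int i) * b (int (n - i)))"
    by (subst sum.reindex) (auto simp: of_nat_diff)
  finally show ?thesis
    using b[of "-1"] by simp
qed

lemma lmul_minus_one:
  fixes a b :: "int \<Rightarrow> 'a::comm_ring"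
  assumes b: "\<And>m. m < 0 \<Longrightarrow> b m = 0"
  shows "lmul (-1) a b (-1) = a (-1) * b 0"
proof -
  have "{-1..(-1::int) - (-1)} = {-1, 0}"
    by auto
  then show ?thesis
    unfolding lmul_def using b[of "-1"] by simp
qed

lemma lmul_below_minus_one:
  fixes a b :: "int \<Rightarrow> 'a::comm_ring"
  assumes b: "\<And>m. m < 0 \<Longrightarrow> b m = 0" and n: "n \<le> -2"
  shows "lmul (-1) a b n = 0"
  unfolding lmul_def using b n by (intro sum.neutral) auto

text \<open>Expansions of 1/(t - c).  At a point lambda_j different from c it is the series
  c'/(1 + c' s) with c' = 1/(lambda_j - c); at lambda_j = c it is 1/s; at infinity it is
  sum_{k >= 1} c^(k-1) s^k.\<close>

lemma inv_pow_exp_Some_ne: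
  fixes lam :: "nat \<Rightarrow> 'a::field_char_0"
  assumes "lam j \<noteq> c"
  shows "inv_pow_exp lam c 1 (Some j) (int k) = dlog_fps (inverse (lam j - c)) $ k"
proof -
  have "inv_pow_exp lam c 1 (Some j) (int k) = (-1) ^ k * inverse (lam j - c) ^ (k + 1)"
    using assms unfolding inv_pow_exp_def by (simp add: divide_inverse power_inverse)
  also have "\<dots> = (- inverse (lam j - c)) ^ k * inverse (lam j - c)"
    by (simp add: power_minus[of "inverse (lam j - c)"])
  finally show ?thesis
    unfolding dlog_fps_def by simp
qed

lemma inv_pow_exp_Some_eq: "inv_pow_exp lam (lam j) 1 (Some j) (int k) = 0"
  unfolding inv_pow_exp_def by simp

lemma inv_pow_exp_Some_minus_one: "inv_pow_exp lam c 1 (Some j) (-1) = (if lam j = c then 1 else 0)"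
  unfolding inv_pow_exp_def by simp

lemma inv_pow_exp_None: "inv_pow_exp lam c 1 None (int k) = (if k \<ge> 1 then c ^ (k - 1) else 0)"
  unfolding inv_pow_exp_def by simp

lemma inv_pow_exp_None_nonpos: "n \<le> 0 \<Longrightarrow> inv_pow_exp lam c 1 None n = 0"
  unfolding inv_pow_exp_def by simp

text \<open>The regular part of h = (1/2) sum_i 1/(t - lambda_i) at lambda_j, up to the factor 1/2.\<close>
definition h_regular :: "(nat \<Rightarrow> 'a::field_char_0) \<Rightarrow> nat \<Rightarrow> nat \<Rightarrow> 'a fps" where
  "h_regular lam N j = (\<Sum>i\<in>{1..N}-{j}. dlog_fps (inverse (lam j - lam i)))"

lemma hexp_Some:
  fixes lam :: "nat \<Rightarrow> 'a::field_char_0"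
  assumes j: "j \<in> {1..N}" and inj: "inj_on lam {1..N}"
  shows "hexp lam N (Some j) (-1) = 1/2"
    and "hexp lam N (Some j) (int k) = 1/2 * h_regular lam N j $ k"
proof -
  have ne: "lam j \<noteq> lam i" if "i \<in> {1..N} - {j}" for i
    using that j inj by (auto dest: inj_onD)
  have split: "(\<Sum>i\<in>{1..N}. inv_pow_exp lam (lam i) 1 (Some j) n)
      = inv_pow_exp lam (lam j) 1 (Some j) n + (\<Sum>i\<in>{1..N}-{j}. inv_pow_exp lam (lam i) 1 (Some j) n)" for n
    using j by (rule sum.remove[rotated]) simp
  have "(\<Sum>i\<in>{1..N}-{j}. inv_pow_exp lam (lam i) 1 (Some j) (-1)) = 0"
    using ne by (intro sum.neutral) (simp add: inv_pow_exp_Some_minus_one del: One_nat_def)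
  then show "hexp lam N (Some j) (-1) = 1/2"
    unfolding hexp_def split by (simp add: inv_pow_exp_Some_minus_one del: One_nat_def)
  have "(\<Sum>i\<in>{1..N}-{j}. inv_pow_exp lam (lam i) 1 (Some j) (int k)) = h_regular lam N j $ k"
    unfolding h_regular_def fps_sum_nth using ne by (intro sum.cong) (simp_all add: inv_pow_exp_Some_ne del: One_nat_def)
  then show "hexp lam N (Some j) (int k) = 1/2 * h_regular lam N j $ k"
    unfolding hexp_def split by (simp add: inv_pow_exp_Some_eq del: One_nat_def)
qed

lemma hexp_None_nonpos: "n \<le> 0 \<Longrightarrow> hexp lam N None n = 0"
  unfolding hexp_def by (simp add: inv_pow_exp_None_nonpos del: One_nat_def)

lemma hexp_None_nat:
  fixes lam :: "nat \<Rightarrow> 'a::field_char_0"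
  shows "hexp lam N None (int k) = (if k = 0 then 0 else 1/2 * (\<Sum>l\<in>{1..N}. lam l ^ (k - 1)))"
  unfolding hexp_def by (simp add: inv_pow_exp_None del: One_nat_def)

text \<open>Principal parts.  Since G^lambda has no pole, the principal part of h G^lambda at a finite
  point is (1/2) G^lambda(0)/s, and at infinity it vanishes because h has a zero there.\<close>

lemma sum_LamSet: "(\<Sum>la\<in>LamSet N. F la) = (\<Sum>i\<in>{1..N}. F (Some i)) + F None"
proof -
  have "(\<Sum>la\<in>LamSet N. F la) = (\<Sum>la\<in>Some ` {1..N}. F la) + (\<Sum>la\<in>{None}. F la)"
    unfolding LamSet_def by (rule sum.union_disjoint) auto
  also have "(\<Sum>la\<in>Some ` {1..N}. F la) = (\<Sum>i\<in>{1..N}. F (Some i))"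
    by (subst sum.reindex) (simp_all add: inj_on_def)
  finally show ?thesis
    by simp
qed

lemma expand_pp_Some_simple_pole:
  fixes P :: "int \<Rightarrow> 'a::field_char_0"
  assumes "\<And>k. k \<ge> 2 \<Longrightarrow> P (- int k) = 0"
  shows "expand_pp lam (Some i) P mu n = P (-1) * inv_pow_exp lam (lam i) 1 mu n"
proof -
  have "{k::nat. 1 \<le> k \<and> P (- int k) \<noteq> 0} \<subseteq> {1}"
    using assms by (auto simp: not_less_eq_eq) (metis One_nat_def le_antisym not_less_eq_eq numeral_2_eq_2)
  then have "(\<Sum>k\<in>{k::nat. 1 \<le> k \<and> P (- int k) \<noteq> 0}. P (- int k) * inv_pow_exp lam (lam i) k mu n)
      = (\<Sum>k\<in>{1}. P (- int k) * inv_pow_exp lam (lam i) k mu n)"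
    by (intro sum.mono_neutral_left) auto
  then show ?thesis
    unfolding expand_pp_def by simp
qed

lemma principal_part_Some:
  fixes lam :: "nat \<Rightarrow> 'a::field_char_0"
  assumes i: "i \<in> {1..N}" and inj: "inj_on lam {1..N}"
  shows "expand_pp lam (Some i) (Pr (Some i) (lmul (-1) (hexp lam N (Some i)) (lift G (Some i)))) mu n
       = (1/2 * G (Some i) 0) * inv_pow_exp lam (lam i) 1 mu n"
proof -
  let ?P = "Pr (Some i) (lmul (-1) (hexp lam N (Some i)) (lift G (Some i)))"
  have "?P (- int k) = 0" if "k \<ge> 2" for k
    using that lmul_below_minus_one[OF lift_neg, where n = "- int k"] by (simp add: Pr_def)
  moreover have "?P (-1) = 1/2 * G (Some i) 0"
    using lmul_minus_one[where b = "lift G (Some i)", OF lift_neg] hexp_Some(1)[OF i inj]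
    by (simp add: Pr_def lift_def)
  ultimately show ?thesis
    using expand_pp_Some_simple_pole[of ?P lam i mu n] by simp
qed

lemma principal_part_None:
  "expand_pp lam None (Pr None (lmul (-1) (hexp lam N None) (lift G None))) mu n = 0"
proof -
  have "lmul (-1) (hexp lam N None) (lift G None) (- int k) = 0" for k
    unfolding lmul_def
  proof (intro sum.neutral ballI)
    fix x assume "x \<in> {-1..- int k - -1}"
    then show "hexp lam N None x * lift G None (- int k - x) = 0"
      by (cases "x \<le> 0") (simp_all add: hexp_None_nonpos lift_neg)
  qed
  then show ?thesis
    unfolding expand_pp_def Pr_def by simp
qed

lemma hact_eq:
  fixes lam :: "nat \<Rightarrow> 'a::field_char_0"
  assumes inj: "inj_on lam {1..N}"
  shows "hact lam N G mu n = lmul (-1) (hexp lam N mu) (lift G mu) (int n)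
     - (\<Sum>i\<in>{1..N}. (1/2 * G (Some i) 0) * inv_pow_exp lam (lam i) 1 mu (int n))"
  unfolding hact_def sum_LamSet principal_part_None add_0_right
  using principal_part_Some[OF _ inj] by (metis (no_types, lifting) sum.cong)

section \<open>The horizontality equation at the points of Lambda\<close>

text \<open>The part of hact at lambda_j coming from the product phi(h) G: the pole (1/2)/s of h shifts
  the coefficients of G down by one.\<close>
lemma lmul_hexp_Some:
  fixes lam :: "nat \<Rightarrow> 'a::field_char_0"
  assumes j: "j \<in> {1..N}" and inj: "inj_on lam {1..N}"
  shows "lmul (-1) (hexp lam N (Some j)) (lift G (Some j)) (int n)
       = 1/2 * G (Some j) (n + 1) + 1/2 * (h_regular lam N j * Abs_fps (G (Some j))) $ n"
proof -
  have "lmul (-1) (hexp lam N (Some j)) (lift G (Some j)) (int n)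
      = hexp lam N (Some j) (-1) * lift G (Some j) (int n + 1)
        + (\<Sum>i=0..n. hexp lam N (Some j) (int i) * lift G (Some j) (int (n - i)))"
    by (rule lmul_split) (rule lift_neg)
  also have "lift G (Some j) (int n + 1) = G (Some j) (n + 1)"
    using lift_nat[of G "Some j" "n + 1"] by (simp add: add.commute)
  also have "(\<Sum>i=0..n. hexp lam N (Some j) (int i) * lift G (Some j) (int (n - i)))
      = (\<Sum>i=0..n. 1/2 * (h_regular lam N j $ i * G (Some j) (n - i)))"
    unfolding hexp_Some[OF j inj] lift_nat by (simp add: mult.assoc)
  finally show ?thesis
    by (simp add: hexp_Some(1)[OF j inj] fps_mult_nth sum_distrib_left)
qed

definition residue_series :: "(nat \<Rightarrow> 'a::field_char_0) \<Rightarrow> nat \<Rightarrow> (nat option \<Rightarrow> nat \<Rightarrow> 'a) \<Rightarrow> nat \<Rightarrow> 'a fps" where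
  "residue_series lam N G j = (\<Sum>i\<in>{1..N}-{j}. fps_const (G (Some i) 0) * dlog_fps (inverse (lam j - lam i)))"

lemma residues_at_Some:
  fixes lam :: "nat \<Rightarrow> 'a::field_char_0"
  assumes j: "j \<in> {1..N}" and inj: "inj_on lam {1..N}"
  shows "(\<Sum>i\<in>{1..N}. (1/2 * G (Some i) 0) * inv_pow_exp lam (lam i) 1 (Some j) (int n))
       = 1/2 * residue_series lam N G j $ n"
proof -
  have "(\<Sum>i\<in>{1..N}. (1/2 * G (Some i) 0) * inv_pow_exp lam (lam i) 1 (Some j) (int n))
      = (1/2 * G (Some j) 0) * inv_pow_exp lam (lam j) 1 (Some j) (int n)
        + (\<Sum>i\<in>{1..N}-{j}. (1/2 * G (Some i) 0) * inv_pow_exp lam (lam i) 1 (Some j) (int n))"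
    using j by (rule sum.remove[rotated]) simp
  also have "\<dots> = (\<Sum>i\<in>{1..N}-{j}. 1/2 * (G (Some i) 0 * dlog_fps (inverse (lam j - lam i)) $ n))"
  proof -
    have "lam j \<noteq> lam i" if "i \<in> {1..N} - {j}" for i
      using that j inj by (auto dest: inj_onD)
    then show ?thesis
      by (simp add: inv_pow_exp_Some_eq inv_pow_exp_Some_ne del: One_nat_def)
  qed
  finally show ?thesis
    unfolding residue_series_def fps_sum_nth by (simp add: sum_distrib_left)
qed

lemma horizontal_ode_Some:
  fixes lam :: "nat \<Rightarrow> 'a::field_char_0" and G :: "nat option \<Rightarrow> nat \<Rightarrow> 'a"
  assumes j: "j \<in> {1..N}" and inj: "inj_on lam {1..N}"
    and ode: "\<And>n. deriv_t (Some j) G n + hact lam N G (Some j) n = 0"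
  defines "f \<equiv> Abs_fps (G (Some j))"
  shows "fps_const 2 * (fps_X * fps_deriv f) + fps_const (of_int 1) * f + fps_X * h_regular lam N j * f
     = fps_const (f $ 0) + fps_X * residue_series lam N G j"
proof (rule fps_ext)
  fix m
  let ?U = "h_regular lam N j" and ?E = "residue_series lam N G j"
  show "(fps_const 2 * (fps_X * fps_deriv f) + fps_const (of_int 1) * f + fps_X * ?U * f) $ m
      = (fps_const (f $ 0) + fps_X * ?E) $ m"
  proof (cases m)
    case (Suc n)
    have "of_nat (n + 1) * G (Some j) (n + 1)
        + (1/2 * G (Some j) (n + 1) + 1/2 * (?U * f) $ n - 1/2 * ?E $ n) = 0"
      using ode[of n] unfolding hact_eq[OF inj] lmul_hexp_Some[OF j inj] residues_at_Some[OF j inj]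
      by (simp add: deriv_t_def f_def)
    then have "2 * (of_nat n + 1) * f $ (n + 1) + f $ (n + 1) + (?U * f) $ n = ?E $ n"
      unfolding f_def by (simp add: algebra_simps)
    then show ?thesis
      using Suc by (simp add: algebra_simps)
  qed simp
qed

lemma hexp_None_Suc:
  fixes lam :: "nat \<Rightarrow> 'a::field_char_0"
  shows "hexp lam N None (int (Suc k))
       = 1/2 * (fps_const (of_nat N) - fps_X * (\<Sum>l\<in>{1..N}. dlog_fps (- lam l))) $ k"
  unfolding hexp_None_nat[of lam N "Suc k"]
  by (cases k) (simp_all add: fps_sum_nth dlog_fps_def sum_negf[symmetric] mult.commute)

lemma lmul_hexp_None:
  fixes lam :: "nat \<Rightarrow> 'a::field_char_0"
  shows "lmul (-1) (hexp lam N None) (lift G None) (int (Suc m))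
       = 1/2 * ((fps_const (of_nat N) - fps_X * (\<Sum>l\<in>{1..N}. dlog_fps (- lam l))) * Abs_fps (G None)) $ m"
proof -
  let ?h = "\<lambda>i. hexp lam N None (int i)"
  have "lmul (-1) (hexp lam N None) (lift G None) (int (Suc m))
      = hexp lam N None (-1) * lift G None (int (Suc m) + 1)
        + (\<Sum>i=0..Suc m. ?h i * lift G None (int (Suc m - i)))"
    by (rule lmul_split) (rule lift_neg)
  also have "\<dots> = (\<Sum>i=0..Suc m. ?h i * G None (Suc m - i))"
    by (simp only: lift_nat hexp_None_nonpos[of "-1"]) simp
  also have "\<dots> = (\<Sum>i=0..m. ?h (Suc i) * G None (m - i))"
    by (subst sum.atLeast0_atMost_Suc_shift) (simp add: hexp_None_nonpos)
  finally show ?thesis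
    unfolding hexp_None_Suc by (simp add: fps_mult_nth sum_distrib_left mult.assoc)
qed

lemma horizontal_ode_None:
  fixes lam :: "nat \<Rightarrow> 'a::field_char_0" and G :: "nat option \<Rightarrow> nat \<Rightarrow> 'a"
  assumes inj: "inj_on lam {1..N}"
    and ode: "\<And>n. deriv_t None G n + hact lam N G None n = 0"
  defines "f \<equiv> Abs_fps (G None)" and "U \<equiv> \<Sum>l\<in>{1..N}. dlog_fps (- lam l)"
  shows "fps_const 2 * (fps_X * fps_deriv f) + fps_const (of_int (- int N)) * f + fps_X * U * f
     = - (\<Sum>i\<in>{1..N}. fps_const (G (Some i) 0) * Abs_fps (\<lambda>k. lam i ^ k))"
proof (rule fps_ext)
  fix m
  define P where "P = (fps_X * U * f) $ m"
  have D: "deriv_t None G (Suc m) = - (of_nat m * f $ m)"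
    by (simp add: deriv_t_def f_def)
  have R: "(\<Sum>i\<in>{1..N}. (1/2 * G (Some i) 0) * inv_pow_exp lam (lam i) 1 None (int (Suc m)))
      = 1/2 * (\<Sum>i\<in>{1..N}. G (Some i) 0 * lam i ^ m)"
    unfolding inv_pow_exp_None by (simp add: sum_distrib_left mult.assoc)
  have "((fps_const (of_nat N) - fps_X * U) * f) $ m = of_nat N * f $ m - P"
    unfolding P_def by (simp only: left_diff_distrib fps_sub_nth fps_mult_left_const_nth)
  then have L: "lmul (-1) (hexp lam N None) (lift G None) (int (Suc m)) = 1/2 * (of_nat N * f $ m - P)"
    using lmul_hexp_None[of lam N G m] unfolding U_def[symmetric] f_def[symmetric] by simp
  let ?S = "\<Sum>i\<in>{1..N}. G (Some i) 0 * lam i ^ m"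
  have "(2 * of_nat m - of_nat N) * f $ m + P + ?S
      = -2 * (- (of_nat m * f $ m) + (1/2 * (of_nat N * f $ m - P) - 1/2 * ?S))"
    by (simp add: field_simps)
  also have "\<dots> = 0"
    using ode[of "Suc m"] unfolding hact_eq[OF inj] D R L by simp
  finally have "(2 * of_nat m - of_nat N) * f $ m + P = - ?S"
    by (simp add: eq_neg_iff_add_eq_0)
  then show "(fps_const 2 * (fps_X * fps_deriv f) + fps_const (of_int (- int N)) * f + fps_X * U * f) $ m
      = (- (\<Sum>i\<in>{1..N}. fps_const (G (Some i) 0) * Abs_fps (\<lambda>k. lam i ^ k))) $ m"
    unfolding ode_operator_nth P_def[symmetric] by (simp add: fps_sum_nth)
qed

context padic_valuation
begin

text \<open>At a finite point: the integrating factor is built from c_i = 1/(lambda_j - lambda_i), which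
  are p-adic units because the lambda_i are distinct modulo p.\<close>
lemma log_growth_Some:
  fixes lam :: "nat \<Rightarrow> 'a" and G :: "nat option \<Rightarrow> nat \<Rightarrow> 'a"
  assumes j: "j \<in> {1..N}" and inj: "inj_on lam {1..N}"
    and unit: "\<And>i k. i \<in> {1..N} \<Longrightarrow> k \<in> {1..N} \<Longrightarrow> i \<noteq> k \<Longrightarrow> v (lam i - lam k) = 0"
    and ode: "\<And>n. deriv_t (Some j) G n + hact lam N G (Some j) n = 0"
  shows "\<exists>\<beta>. \<forall>n\<ge>1. val_ge v (- (log (real p) (real n) + \<beta>)) (G (Some j) n)"
proof -
  define c where "c i = inverse (lam j - lam i)" for i
  have c: "val_ge v 0 (c i)" if "i \<in> {1..N} - {j}" for i
  proof -
    have "lam j - lam i \<noteq> 0"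
      using that j inj by (auto dest: inj_onD)
    then show ?thesis
      using unit[of j i] that j v_inverse unfolding c_def val_ge_def by auto
  qed
  obtain B where B: "\<forall>x\<in>(\<lambda>i. G (Some i) 0) ` {1..N}. val_ge v (- B) x"
    using finite_val_ge_bound by blast
  have T: "val_ge v (- B) ((fps_const (Abs_fps (G (Some j)) $ 0) + fps_X * residue_series lam N G j) $ n)" for n
  proof (cases n)
    case (Suc k)
    have "val_ge v (- B + 0) (G (Some i) 0 * dlog_fps (c i) $ k)" if "i \<in> {1..N} - {j}" for i
      using B that integral_dlog_fps[OF c[OF that]] unfolding integral_fps_def
      by (intro val_ge_mult) auto
    then have "val_ge v (- B) (residue_series lam N G j $ k)"
      unfolding residue_series_def c_def fps_sum_nth fps_mult_left_const_nth
      by (intro val_ge_sum) simp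
    then show ?thesis
      using Suc by simp
  qed (use B j in simp)
  have V: "fps_const 2 * fps_deriv (inv_sqrt_prod ({1..N} - {j}) c)
      = - (h_regular lam N j * inv_sqrt_prod ({1..N} - {j}) c)"
    using inv_sqrt_prod_ode[of "{1..N} - {j}" c] unfolding h_regular_def c_def by simp
  show ?thesis
    using ode_solution_log_growth[OF horizontal_ode_Some[OF j inj ode] V inv_sqrt_prod_0
        integral_inv_sqrt_prod[OF c] _ T] by simp
qed

text \<open>At infinity: the integrating factor is built from c_l = -lambda_l, which are p-integral,
  and a = -N is odd.\<close>
lemma log_growth_None:
  fixes lam :: "nat \<Rightarrow> 'a" and G :: "nat option \<Rightarrow> nat \<Rightarrow> 'a"
  assumes inj: "inj_on lam {1..N}" and N: "odd N"
    and integral: "\<And>i. i \<in> {1..N} \<Longrightarrow> val_ge v 0 (lam i)"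
    and ode: "\<And>n. deriv_t None G n + hact lam N G None n = 0"
  shows "\<exists>\<beta>. \<forall>n\<ge>1. val_ge v (- (log (real p) (real n) + \<beta>)) (G None n)"
proof -
  define c where "c i = - lam i" for i
  obtain B where B: "\<forall>x\<in>(\<lambda>i. G (Some i) 0) ` {1..N}. val_ge v (- B) x"
    using finite_val_ge_bound by blast
  have T: "val_ge v (- B) ((- (\<Sum>i\<in>{1..N}. fps_const (G (Some i) 0) * Abs_fps (\<lambda>k. lam i ^ k))) $ n)" for n
  proof -
    have "val_ge v (- B + 0) (G (Some i) 0 * lam i ^ n)" if "i \<in> {1..N}" for i
      using B that integral[OF that] by (intro val_ge_mult val_ge_power) auto
    then show ?thesis
      by (auto simp: fps_sum_nth intro!: val_ge_minus val_ge_sum)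
  qed
  have V: "fps_const 2 * fps_deriv (inv_sqrt_prod {1..N} c)
      = - ((\<Sum>l\<in>{1..N}. dlog_fps (- lam l)) * inv_sqrt_prod {1..N} c)"
    using inv_sqrt_prod_ode[of "{1..N}" c] unfolding c_def by simp
  have W: "integral_fps v (inv_sqrt_prod {1..N} c)"
    using integral val_ge_minus unfolding c_def by (intro integral_inv_sqrt_prod) auto
  have "odd (- int N)"
    using N by simp
  then show ?thesis
    using ode_solution_log_growth[OF horizontal_ode_None[OF inj ode] V inv_sqrt_prod_0 W _ T] by simp
qed

lemma log_growth_uniform:
  fixes F :: "'b \<Rightarrow> nat \<Rightarrow> 'a"
  assumes "finite S" "\<And>x. x \<in> S \<Longrightarrow> \<exists>\<beta>. \<forall>n\<ge>1. val_ge v (- (log (real p) (real n) + \<beta>)) (F x n)"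
  shows "\<exists>\<beta>. \<forall>x\<in>S. \<forall>n\<ge>1. val_ge v (- (log (real p) (real n) + \<beta>)) (F x n)"
  using assms
proof (induction S rule: finite_induct)
  case (insert x S)
  then obtain \<beta>1 \<beta>2 where
    "\<forall>y\<in>S. \<forall>n\<ge>1. val_ge v (- (log (real p) (real n) + \<beta>1)) (F y n)"
    "\<forall>n\<ge>1. val_ge v (- (log (real p) (real n) + \<beta>2)) (F x n)"
    by (metis insertCI)
  then have "\<forall>y\<in>insert x S. \<forall>n\<ge>1. val_ge v (- (log (real p) (real n) + max \<beta>1 \<beta>2)) (F y n)"
    using val_ge_mono[where M' = "- (log (real p) (real _) + max \<beta>1 \<beta>2)"] by fastforce
  then show ?case
    by blast
qed simp

lemma horizontal_log_growth:
  fixes lam :: "nat \<Rightarrow> 'a" and G :: "nat option \<Rightarrow> nat \<Rightarrow> 'a"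
  assumes inj: "inj_on lam {1..N}" and N: "odd N"
    and integral: "\<And>i. i \<in> {1..N} \<Longrightarrow> val_ge v 0 (lam i)"
    and unit: "\<And>i k. i \<in> {1..N} \<Longrightarrow> k \<in> {1..N} \<Longrightarrow> i \<noteq> k \<Longrightarrow> v (lam i - lam k) = 0"
    and ode: "\<forall>mu\<in>LamSet N. \<forall>n. deriv_t mu G n + hact lam N G mu n = 0"
  shows "\<exists>\<beta>. \<forall>mu\<in>LamSet N. \<forall>n\<ge>1. val_ge v (- (log (real p) (real n) + \<beta>)) (G mu n)"
proof (rule log_growth_uniform)
  show "finite (LamSet N)"
    unfolding LamSet_def by simp
  fix mu assume mu: "mu \<in> LamSet N"
  show "\<exists>\<beta>. \<forall>n\<ge>1. val_ge v (- (log (real p) (real n) + \<beta>)) (G mu n)"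
  proof (cases mu)
    case None
    then show ?thesis
      using log_growth_None[OF inj N integral] ode mu by blast
  next
    case (Some j)
    then have "j \<in> {1..N}"
      using mu unfolding LamSet_def by auto
    then show ?thesis
      using log_growth_Some[OF _ inj unit] ode mu Some by blast
  qed
qed

end

lemma deriv_t_zero_const:
  fixes G :: "nat option \<Rightarrow> nat \<Rightarrow> 'a::field_char_0"
  assumes "\<And>n. deriv_t mu G n = 0" and "l \<ge> 1"
  shows "G mu l = 0"
proof (cases mu)
  case None
  then show ?thesis
    using assms(1)[of "l + 1"] assms(2) by (simp add: deriv_t_def)
next
  case (Some j)
  then show ?thesis
    using assms(1)[of "l - 1"] assms(2) by (simp add: deriv_t_def)
qed

theorem mainTheorem4:
  fixes v :: "'a::field_char_0 \<Rightarrow> int" and p g :: nat and lam :: "nat \<Rightarrow> 'a"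
    and G0 G1 :: "nat option \<Rightarrow> nat \<Rightarrow> 'a"
  assumes "pval_field v p"
    and "g \<ge> 1"
    and "\<forall>i\<in>{1..2*g+1}. lam i = 0 \<or> v (lam i) \<ge> 0"
    and "\<forall>i\<in>{1..2*g+1}. \<forall>j\<in>{1..2*g+1}. i \<noteq> j \<longrightarrow> lam i \<noteq> lam j \<and> v (lam i - lam j) = 0"
    and "in_H v p lam (2*g+1) G0 G1"
  shows "\<exists>\<alpha> \<beta> :: real. \<forall>mu\<in>LamSet (2*g+1). \<forall>j\<in>{0,1::nat}. \<forall>l::nat. l \<ge> 1 \<longrightarrow>
           (let b = (if j = 0 then G0 else G1) mu l in
             b \<noteq> 0 \<longrightarrow> real_of_int (v b) \<ge> - (\<alpha> * log (real p) (real l) + \<beta>))"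
proof -
  interpret padic_valuation v p
    by unfold_locales (rule assms(1))
  have H: "\<forall>mu\<in>LamSet (2*g+1). \<forall>n. deriv_t mu G0 n = 0 \<and> deriv_t mu G1 n + hact lam (2*g+1) G1 mu n = 0"
    using assms(5) unfolding in_H_def by blast
  have "inj_on lam {1..2*g+1}"
    using assms(4) by (auto intro: inj_onI)
  moreover have "\<And>i. i \<in> {1..2*g+1} \<Longrightarrow> val_ge v 0 (lam i)"
    using assms(3) by (auto simp: val_ge_def)
  ultimately obtain \<beta> where \<beta>: "\<forall>mu\<in>LamSet (2*g+1). \<forall>l\<ge>1. val_ge v (- (log (real p) (real l) + \<beta>)) (G1 mu l)"
    using horizontal_log_growth[of lam "2*g+1" G1] assms(4) H by auto
  have "\<forall>mu\<in>LamSet (2*g+1). \<forall>l\<ge>1. G0 mu l = 0"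
    using H deriv_t_zero_const by blast
  then show ?thesis
    using \<beta> unfolding val_ge_def Let_def
    by (intro exI[of _ 1] exI[of _ \<beta>]) auto
qed

end
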